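(* Let $V:\mathbb{R}^d\to\mathbb{R}^n$ be continuously differentiable and $h$-homogeneous, and suppose there are constants $C,\ell>0$ with $\Vert V(\theta)\Vert_\mu\le C\Vert\theta\Vert^\ell$ for all $\theta$. Let $B=\frac{\Vert (I-\gamma P)V^*\Vert_\mu}{1-\gamma}=\frac{\Vert R\Vert_\mu}{1-\gamma}$. Then for any initial condition $\theta(0)=\theta_0$, if $\theta(t)$ follows the dynamics $$\dot\theta=-\nabla V(\theta)^T A\,(V(\theta)-V^* ),$$ we have $\liminf_{t\to\infty}\Vert V(\theta(t))\Vert_\mu\le B$.
   Context: A Markov reward process has finite state space $\mathcal{S}$ with $|\mathcal{S}|=n$, transition matrix $P$ (entries $P(s'|s)$) defining an irreducible, aperiodic Markov chain with stationary distribution $\mu$, a finite reward function $r(s,s')$, and discount factor $\gamma\in[0,1)$. Let $R\in\mathbb{R}^n$ be $R(s)=\mathbb{E}_{s'\sim P(\cdot|s)}[r(s,s')]$, and let $V^*\in\mathbb{R}^n$ be the true value function, the unique solution of $V^*=R+\gamma PV^*$. Let $D_\mu$ be the diagonal matrix with $\mu$ on the diagonal and $A:=D_\mu(I-\gamma P)$. For $x\in\mathbb{R}^n$, $\Vert x\Vert_\mu^2=x^TD_\mu x=\sum_s\mu(s)x_s^2$; $\Vert\theta\Vert$ is the Euclidean norm. $\nabla V(\theta)$ denotes the $n\times d$ Jacobian of $V$. A differentiable function $f:\mathbb{R}^k\to\mathbb{R}^m$ is called $h$-homogeneous (for $h\in\mathbb{R}$) if $f(x)=h\,\nabla f(x)\,x$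 for all $x$. *)

theory Defs
  imports "HOL-Analysis.Analysis"
begin

text \<open>States are the elements of a finite type 'n; parameters live in real^'d.
  Matrices are real^'n^'n with entry (P $ s $ s') = P(s'|s).\<close>

fun mpow :: "real^'n^'n \<Rightarrow> nat \<Rightarrow> real^'n^'n" where
  "mpow M 0 = mat 1"
| "mpow M (Suc k) = M ** mpow M k"

definition stochastic_matrix :: "real^'n^'n \<Rightarrow> bool" where
  "stochastic_matrix P \<longleftrightarrow> (\<forall>s s'. P $ s $ s' \<ge> 0) \<and> (\<forall>s. (\<Sum>s'\<in>UNIV. P $ s $ s') = 1)"

definition irreducible_chain :: "real^'n^'n \<Rightarrow> bool" where
  "irreducible_chain P \<longleftrightarrow> (\<forall>s s'. \<exists>k>0. mpow P k $ s $ s' > 0)"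

definition period :: "real^'n^'n \<Rightarrow> 'n \<Rightarrow> nat" where
  "period P s = Gcd {k. k > 0 \<and> mpow P k $ s $ s > 0}"

definition aperiodic_chain :: "real^'n^'n \<Rightarrow> bool" where
  "aperiodic_chain P \<longleftrightarrow> (\<forall>s. period P s = 1)"

definition stationary_distribution :: "real^'n^'n \<Rightarrow> real^'n \<Rightarrow> bool" where
  "stationary_distribution P \<mu> \<longleftrightarrow> (\<forall>s. \<mu> $ s \<ge> 0) \<and> (\<Sum>s\<in>UNIV. \<mu> $ s) = 1
     \<and> (\<forall>s'. (\<Sum>s\<in>UNIV. \<mu> $ s * P $ s $ s') = \<mu> $ s')"

definition diag_mat :: "real^'n \<Rightarrow> real^'n^'n" where
  "diag_mat v = (\<chi> i j. if i = j then v $ i else 0)"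

definition mu_norm :: "real^'n \<Rightarrow> real^'n \<Rightarrow> real" where
  "mu_norm \<mu> x = sqrt (\<Sum>s\<in>UNIV. \<mu> $ s * (x $ s)\<^sup>2)"

definition exp_reward :: "real^'n^'n \<Rightarrow> ('n \<Rightarrow> 'n \<Rightarrow> real) \<Rightarrow> real^'n" where
  "exp_reward P r = (\<chi> s. \<Sum>s'\<in>UNIV. P $ s $ s' * r s s')"

end

theory Submission
  imports Defs
begin

text \<open>Along the flow, d/dt |\<theta>|^2 = 2 <\<theta>, \<theta>'> = -2 <J \<theta>, A (V - V*)> = -(2/h) <V, A (V - V*)>
  by homogeneity. Since P does not increase the \<mu>-norm (Jensen plus stationarity of \<mu>),
  <u, A (u - V*)> \<ge> (1 - \<gamma>) |u|_\<mu> (|u|_\<mu> - B). Hence if |V(\<theta>(t))|_\<mu> stayed above some c > B,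
  then |\<theta>|^2 would decrease at a uniform positive rate and eventually become negative.
  For h \<le> 0 the value function vanishes identically: with h < 0, V(s x) = s^(1/h) V(x) would
  blow up as s \<rightarrow> 0+, although V is continuous with V(0) = 0.\<close>

definition weighted_vec :: "real^'n \<Rightarrow> real^'n \<Rightarrow> real^'n" where
  "weighted_vec \<mu> x = (\<chi> s. sqrt (\<mu> $ s) * x $ s)"

lemma weighted_vec_diff: "weighted_vec \<mu> (x - y) = weighted_vec \<mu> x - weighted_vec \<mu> y"
  by (simp add: weighted_vec_def vec_eq_iff algebra_simps)

lemma weighted_vec_scaleR: "weighted_vec \<mu> (c *\<^sub>R x) = c *\<^sub>R weighted_vec \<mu> x"
  by (simp add: weighted_vec_def vec_eq_iff)

lemma inner_weighted_vec:
  assumes "\<And>s. 0 \<le> \<mu> $ s"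
  shows "inner (weighted_vec \<mu> u) (weighted_vec \<mu> v) = (\<Sum>s\<in>UNIV. \<mu> $ s * u $ s * v $ s)"
  using assms by (simp add: weighted_vec_def inner_vec_def algebra_simps)

lemma mu_norm_eq_norm_weighted_vec:
  assumes "\<And>s. 0 \<le> \<mu> $ s"
  shows "mu_norm \<mu> x = norm (weighted_vec \<mu> x)"
  using assms by (simp add: mu_norm_def norm_vec_def L2_set_def weighted_vec_def power_mult_distrib)

lemma mu_norm_nonneg:
  assumes "\<And>s. 0 \<le> \<mu> $ s"
  shows "0 \<le> mu_norm \<mu> x"
  using assms by (simp add: mu_norm_eq_norm_weighted_vec)

lemma inner_diag_mat_mult:
  assumes "\<And>s. 0 \<le> \<mu> $ s"
  shows "inner u ((diag_mat \<mu> ** M) *v z) = inner (weighted_vec \<mu> u) (weighted_vec \<mu> (M *v z))"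
proof -
  have "(diag_mat \<mu> ** M) *v z = (\<chi> s. \<mu> $ s * (M *v z) $ s)"
    by (simp add: vec_eq_iff diag_mat_def matrix_matrix_mult_def matrix_vector_mult_def
        if_distrib if_distribR sum_distrib_left mult.assoc cong: if_cong)
  then show ?thesis
    unfolding inner_weighted_vec[OF assms] by (simp add: inner_vec_def algebra_simps)
qed

lemma mu_norm_stochastic_le:
  assumes "stochastic_matrix P" and "stationary_distribution P \<mu>"
  shows "mu_norm \<mu> (P *v v) \<le> mu_norm \<mu> v"
proof -
  have P0: "\<And>s s'. 0 \<le> P $ s $ s'" and P1: "\<And>s. (\<Sum>s'\<in>UNIV. P $ s $ s') = 1"
    using assms(1) by (auto simp: stochastic_matrix_def)
  have \<mu>0: "\<And>s. 0 \<le> \<mu> $ s" and \<mu>P: "\<And>s'. (\<Sum>s\<in>UNIV. \<mu> $ s * P $ s $ s') = \<mu> $ s'"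
    using assms(2) by (auto simp: stationary_distribution_def)
  have jensen: "((P *v v) $ s)\<^sup>2 \<le> (\<Sum>s'\<in>UNIV. P $ s $ s' * (v $ s')\<^sup>2)" for s
    using convex_on_sum[OF finite_class.finite_UNIV UNIV_not_empty convex_power2,
        of "\<lambda>s'. P $ s $ s'" "\<lambda>s'. v $ s'"]
    by (simp add: P0 P1 matrix_vector_mult_def)
  have "(\<Sum>s\<in>UNIV. \<mu> $ s * ((P *v v) $ s)\<^sup>2)
      \<le> (\<Sum>s\<in>UNIV. \<Sum>s'\<in>UNIV. \<mu> $ s * P $ s $ s' * (v $ s')\<^sup>2)"
    by (intro sum_mono)
      (simp add: jensen \<mu>0 mult_left_mono mult.assoc flip: sum_distrib_left)
  also have "\<dots> = (\<Sum>s'\<in>UNIV. \<mu> $ s' * (v $ s')\<^sup>2)"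
    by (subst sum.swap) (simp add: \<mu>P flip: sum_distrib_right)
  finally show ?thesis
    unfolding mu_norm_def by simp
qed

lemma inner_diag_Bellman_ge:
  assumes stoch: "stochastic_matrix P" and stat: "stationary_distribution P \<mu>" and "0 \<le> \<gamma>"
  shows "(1 - \<gamma>) * (mu_norm \<mu> u)\<^sup>2 - mu_norm \<mu> u * mu_norm \<mu> ((mat 1 - \<gamma> *\<^sub>R P) *v y)
    \<le> inner u ((diag_mat \<mu> ** (mat 1 - \<gamma> *\<^sub>R P)) *v (u - y))"
proof -
  have \<mu>0: "\<And>s. 0 \<le> \<mu> $ s"
    using stat by (simp add: stationary_distribution_def)
  define w where "w = weighted_vec \<mu>"
  define M where "M = mat 1 - \<gamma> *\<^sub>R P"
  have norm_w: "mu_norm \<mu> x = norm (w x)" for x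
    by (simp add: w_def mu_norm_eq_norm_weighted_vec \<mu>0)
  have "M *v (u - y) = u - \<gamma> *\<^sub>R (P *v u) - M *v y"
    by (simp add: M_def matrix_vector_mult_diff_distrib matrix_vector_mult_diff_rdistrib
        scaleR_matrix_vector_assoc)
  then have "inner u ((diag_mat \<mu> ** M) *v (u - y))
      = (norm (w u))\<^sup>2 - \<gamma> * inner (w u) (w (P *v u)) - inner (w u) (w (M *v y))"
    by (simp add: inner_diag_mat_mult \<mu>0 w_def weighted_vec_diff weighted_vec_scaleR
        inner_diff_right power2_norm_eq_inner)
  moreover have "\<gamma> * inner (w u) (w (P *v u)) \<le> \<gamma> * (norm (w u))\<^sup>2"
  proof (rule mult_left_mono[OF _ \<open>0 \<le> \<gamma>\<close>])
    have "inner (w u) (w (P *v u)) \<le> norm (w u) * norm (w (P *v u))"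
      by (rule norm_cauchy_schwarz)
    also have "\<dots> \<le> norm (w u) * norm (w u)"
      using mu_norm_stochastic_le[OF stoch stat] by (simp add: norm_w mult_left_mono)
    finally show "inner (w u) (w (P *v u)) \<le> (norm (w u))\<^sup>2"
      by (simp add: power2_eq_square)
  qed
  moreover have "inner (w u) (w (M *v y)) \<le> norm (w u) * norm (w (M *v y))"
    by (rule norm_cauchy_schwarz)
  ultimately show ?thesis
    by (simp add: norm_w M_def algebra_simps)
qed

lemma homogeneous_neg_degree_eq_0:
  fixes f :: "'a::real_normed_vector \<Rightarrow> 'b::real_normed_vector"
  assumes deriv: "\<And>x. (f has_derivative f' x) (at x)"
    and homog: "\<And>x. f x = h *\<^sub>R f' x x"
    and "h < 0"
  shows "f x = 0"
proof -
  define k where "k = 1 / h"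
  have "k < 0"
    using \<open>h < 0\<close> by (simp add: k_def)
  define \<phi> where "\<phi> s = s powr (- k) *\<^sub>R f (s *\<^sub>R x)" for s :: real
  have linear: "f' y (c *\<^sub>R v) = c *\<^sub>R f' y v" for y c v
    using has_derivative_linear[OF deriv] by (rule linear_scale)
  have radial: "f' (s *\<^sub>R x) x = (k / s) *\<^sub>R f (s *\<^sub>R x)" if "s > 0" for s
    using homog[of "s *\<^sub>R x"] that \<open>h < 0\<close> by (simp add: linear k_def)
  have "(\<phi> has_derivative (\<lambda>_. 0)) (at s within {0<..})" if "s \<in> {0<..}" for s
  proof -
    have "s > 0"
      using that by simp
    have "((\<lambda>s. f (s *\<^sub>R x)) has_derivative (\<lambda>t. f' (s *\<^sub>R x) (t *\<^sub>R x))) (at s)"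
      by (rule has_derivative_compose[OF _ deriv]) (auto intro: derivative_eq_intros)
    then have "(\<phi> has_derivative (\<lambda>t. s powr (- k) *\<^sub>R f' (s *\<^sub>R x) (t *\<^sub>R x)
        - (s powr (- k) * (t * k) / s) *\<^sub>R f (s *\<^sub>R x))) (at s)"
      unfolding \<phi>_def using \<open>s > 0\<close> by (auto intro!: derivative_eq_intros)
    moreover have "s powr (- k) *\<^sub>R f' (s *\<^sub>R x) (t *\<^sub>R x)
        = (s powr (- k) * (t * k) / s) *\<^sub>R f (s *\<^sub>R x)" for t
      using \<open>s > 0\<close> by (simp add: linear radial)
    ultimately show ?thesis
      by (simp add: has_derivative_at_withinI)
  qed
  then obtain c where c: "\<forall>s\<in>{0<..}. \<phi> s = c"
    using has_derivative_zero_constant[OF convex_real_interval(3)] by blast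
  have "\<phi> 1 = f x"
    by (simp add: \<phi>_def)
  then have \<phi>_const: "\<forall>\<^sub>F s in at_right 0. \<phi> s = f x"
    using eventually_at_right_less[of "0::real"] c by (auto elim: eventually_mono)
  have "((\<lambda>s. f (s *\<^sub>R x)) \<longlongrightarrow> f (0 *\<^sub>R x)) (at_right 0)"
    by (intro tendsto_within_subset[OF isCont_tendsto_compose[of _ f]] tendsto_intros
        has_derivative_continuous[OF deriv]) auto
  moreover have "((\<lambda>s::real. s powr (- k)) \<longlongrightarrow> 0) (at_right 0)"
    using \<open>k < 0\<close> eventually_at_right_less[of "0::real"]
    by (intro tendsto_zero_powrI tendsto_intros) (auto elim: eventually_mono)
  ultimately have "(\<phi> \<longlongrightarrow> 0) (at_right 0)"
    unfolding \<phi>_def using tendsto_scaleR by force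
  then have "((\<lambda>_. f x) \<longlongrightarrow> 0) (at_right (0::real))"
    using \<phi>_const by (rule Lim_transform_eventually)
  then show ?thesis
    using tendsto_const_iff[OF trivial_limit_at_right_real] by blast
qed

lemma gradient_flow_norm_sq_has_derivative:
  fixes \<theta> :: "real \<Rightarrow> real^'d" and V :: "real^'d \<Rightarrow> real^'n" and J :: "real^'d \<Rightarrow> real^'d^'n"
  assumes homog: "\<And>x. V x = h *\<^sub>R (J x *v x)" and "h \<noteq> 0"
    and flow: "(\<theta> has_vector_derivative - (transpose (J (\<theta> t)) *v w)) (at t)"
  shows "((\<lambda>t. (norm (\<theta> t))\<^sup>2) has_real_derivative - (2 / h) * inner (V (\<theta> t)) w) (at t)"
proof -
  have "inner (\<theta> t) (transpose (J (\<theta> t)) *v w) = inner (J (\<theta> t) *v \<theta> t) w"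
    using dot_lmul_matrix[of w "J (\<theta> t)" "\<theta> t"] by (simp add: inner_commute)
  also have "\<dots> = inner (V (\<theta> t)) w / h"
    using homog[of "\<theta> t"] \<open>h \<noteq> 0\<close> by simp
  finally have "2 * inner (\<theta> t) (- (transpose (J (\<theta> t)) *v w)) = - (2 / h) * inner (V (\<theta> t)) w"
    by simp
  moreover have "((\<lambda>t. inner (\<theta> t) (\<theta> t)) has_real_derivative
      2 * inner (\<theta> t) (- (transpose (J (\<theta> t)) *v w))) (at t)"
    using has_derivative_inner[OF flow[unfolded has_vector_derivative_def]
        flow[unfolded has_vector_derivative_def]]
    unfolding has_field_derivative_def
    by (rule has_derivative_eq_rhs) (simp add: fun_eq_iff inner_commute)
  ultimately show ?thesis
    by (simp add: power2_norm_eq_inner)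
qed

lemma DERIV_le_neg_imp_eventually_neg:
  fixes f :: "real \<Rightarrow> real"
  assumes deriv: "\<And>t. T \<le> t \<Longrightarrow> (f has_real_derivative f' t) (at t)"
    and bound: "\<And>t. T \<le> t \<Longrightarrow> f' t \<le> - \<delta>" and "\<delta> > 0"
  shows "\<exists>t\<ge>T. f t < 0"
proof -
  define t where "t = T + max 0 (f T) / \<delta> + 1"
  have "T < t"
    using \<open>\<delta> > 0\<close> by (simp add: t_def add_nonneg_pos)
  then obtain z where "T < z" and "f t - f T = (t - T) * f' z"
    using MVT2[of T t f f'] deriv by auto
  moreover have "(t - T) * f' z \<le> (t - T) * - \<delta>"
    using bound[of z] \<open>T < t\<close> \<open>T < z\<close> by (intro mult_left_mono) auto
  moreover have "(t - T) * \<delta> = max 0 (f T) + \<delta>"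
    using \<open>\<delta> > 0\<close> by (simp add: t_def field_simps)
  ultimately have "f t < 0"
    using \<open>\<delta> > 0\<close> by linarith
  then show ?thesis
    using \<open>T < t\<close> less_imp_le by blast
qed

lemma Liminf_mu_norm_gradient_flow_le:
  fixes \<theta> :: "real \<Rightarrow> real^'d" and V :: "real^'d \<Rightarrow> real^'n" and J :: "real^'d \<Rightarrow> real^'d^'n"
  assumes stoch: "stochastic_matrix P" and stat: "stationary_distribution P \<mu>"
    and \<gamma>: "0 \<le> \<gamma>" "\<gamma> < 1"
    and homog: "\<And>x. V x = h *\<^sub>R (J x *v x)" and "h > 0"
    and flow: "\<And>t. t > 0 \<Longrightarrow> (\<theta> has_vector_derivative
      - (transpose (J (\<theta> t)) *v ((diag_mat \<mu> ** (mat 1 - \<gamma> *\<^sub>R P)) *v (V (\<theta> t) - Vstar)))) (at t)"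
  shows "Liminf at_top (\<lambda>t. ereal (mu_norm \<mu> (V (\<theta> t))))
    \<le> ereal (mu_norm \<mu> ((mat 1 - \<gamma> *\<^sub>R P) *v Vstar) / (1 - \<gamma>))"
    (is "Liminf at_top (\<lambda>t. ereal (?m t)) \<le> ereal ?B")
proof (rule ccontr)
  have \<mu>0: "\<And>s. 0 \<le> \<mu> $ s"
    using stat by (simp add: stationary_distribution_def)
  have "0 \<le> ?B"
    using \<gamma> by (simp add: mu_norm_nonneg \<mu>0)
  assume "\<not> ?thesis"
  then obtain c where "?B < c" and c_less: "ereal c < Liminf at_top (\<lambda>t. ereal (?m t))"
    using ereal_dense2 not_le by (metis less_ereal.simps(1))
  from c_less have "\<forall>\<^sub>F t in at_top. ereal c < ereal (?m t)"
    by (rule less_LiminfD)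
  then obtain T where T: "\<And>t. T \<le> t \<Longrightarrow> c < ?m t"
    by (auto simp: eventually_at_top_linorder)
  define A where "A = diag_mat \<mu> ** (mat 1 - \<gamma> *\<^sub>R P)"
  define \<delta> where "\<delta> = 2 / h * ((1 - \<gamma>) * (c * (c - ?B)))"
  have "\<delta> > 0"
    using \<open>?B < c\<close> \<open>0 \<le> ?B\<close> \<gamma> \<open>h > 0\<close> by (simp add: \<delta>_def)
  define D where "D t = - (2 / h) * inner (V (\<theta> t)) (A *v (V (\<theta> t) - Vstar))" for t
  have "D t \<le> - \<delta>" if "max T 1 \<le> t" for t
  proof -
    have "c < ?m t"
      using T that by simp
    have "(1 - \<gamma>) * (c * (c - ?B)) \<le> (1 - \<gamma>) * (?m t * (?m t - ?B))"
      using \<open>c < ?m t\<close> \<open>?B < c\<close> \<open>0 \<le> ?B\<close> \<gamma> by (intro mult_left_mono mult_mono) auto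
    also have "\<dots> = (1 - \<gamma>) * (?m t)\<^sup>2 - ?m t * mu_norm \<mu> ((mat 1 - \<gamma> *\<^sub>R P) *v Vstar)"
      using \<gamma> by (simp add: field_simps power2_eq_square)
    also have "\<dots> \<le> inner (V (\<theta> t)) (A *v (V (\<theta> t) - Vstar))"
      unfolding A_def by (rule inner_diag_Bellman_ge[OF stoch stat \<gamma>(1)])
    finally show ?thesis
      using mult_left_mono[OF _ less_imp_le[OF divide_pos_pos[OF _ \<open>h > 0\<close>]], of _ _ 2]
      by (simp add: \<delta>_def D_def)
  qed
  moreover have "((\<lambda>t. (norm (\<theta> t))\<^sup>2) has_real_derivative D t) (at t)" if "max T 1 \<le> t" for t
    unfolding D_def using that \<open>h > 0\<close>
    by (intro gradient_flow_norm_sq_has_derivative[OF homog] flow[folded A_def]) auto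
  ultimately obtain t where "(norm (\<theta> t))\<^sup>2 < 0"
    using DERIV_le_neg_imp_eventually_neg[of "max T 1" _ D, OF _ _ \<open>\<delta> > 0\<close>] by blast
  then show False
    by simp
qed

theorem theorem1:
  fixes P :: "real^'n^'n" and \<mu> :: "real^'n" and r :: "'n \<Rightarrow> 'n \<Rightarrow> real"
    and \<gamma> :: real and Vstar :: "real^'n"
    and V :: "real^'d \<Rightarrow> real^'n" and J :: "real^'d \<Rightarrow> real^'d^'n"
    and h C ell :: real and \<theta> :: "real \<Rightarrow> real^'d" and \<theta>0 :: "real^'d"
  assumes stoch: "stochastic_matrix P"
    and irred: "irreducible_chain P"
    and aper: "aperiodic_chain P"
    and stat: "stationary_distribution P \<mu>"
    and gamma: "0 \<le> \<gamma>" "\<gamma> < 1"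
    and Vstar: "Vstar = exp_reward P r + \<gamma> *\<^sub>R (P *v Vstar)"
    and deriv: "\<And>x. (V has_derivative (\<lambda>v. J x *v v)) (at x)"
    and contJ: "continuous_on UNIV J"
    and homog: "\<And>x. V x = h *\<^sub>R (J x *v x)"
    and Cpos: "C > 0" and lpos: "ell > 0"
    and growth: "\<And>x. mu_norm \<mu> (V x) \<le> C * norm x powr ell"
    and init: "\<theta> 0 = \<theta>0"
    and ode: "\<And>t. t \<ge> 0 \<Longrightarrow>
       (\<theta> has_vector_derivative
          (- (transpose (J (\<theta> t)) *v
               ((diag_mat \<mu> ** (mat 1 - \<gamma> *\<^sub>R P)) *v (V (\<theta> t) - Vstar)))))
        (at t within {0..})"
  shows "Liminf at_top (\<lambda>t. ereal (mu_norm \<mu> (V (\<theta> t))))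
           \<le> ereal (mu_norm \<mu> ((mat 1 - \<gamma> *\<^sub>R P) *v Vstar) / (1 - \<gamma>))"
proof (cases "h > 0")
  case True
  have "(\<theta> has_vector_derivative
      - (transpose (J (\<theta> t)) *v ((diag_mat \<mu> ** (mat 1 - \<gamma> *\<^sub>R P)) *v (V (\<theta> t) - Vstar)))) (at t)"
    if "t > 0" for t
    using has_vector_derivative_within_subset[OF ode[of t], of "{0<..}"] that
    by (simp add: at_within_open[OF _ open_greaterThan] subset_eq)
  then show ?thesis
    using Liminf_mu_norm_gradient_flow_le[OF stoch stat gamma homog True] by blast
next
  case False
  have "V x = 0" for x
    using homogeneous_neg_degree_eq_0[OF deriv homog] homog[of x] False
    by (cases "h = 0") auto
  moreover have "0 \<le> mu_norm \<mu> ((mat 1 - \<gamma> *\<^sub>R P) *v Vstar) / (1 - \<gamma>)"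
    using stat gamma by (simp add: mu_norm_nonneg stationary_distribution_def)
  ultimately show ?thesis
    by (simp add: mu_norm_def Liminf_const)
qed

end
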